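(* Let $A$ be a module over a ring and let $A=\bigoplus_{i\in I}A_i$ be a direct decomposition of $A$. Then the endomorphism ring $\mathrm{End}\,A$ is centrally essential if and only if for every $i\in I$: (1) $A_i$ is a fully invariant submodule of $A$, and (2) the ring $\mathrm{End}\,A_i$ is centrally essential.
   Context: All rings are associative with identity. A ring $R$ is centrally essential if for every non-zero $a\in R$ there exist non-zero elements $x,y$ of the center of $R$ with $ax=y$. A submodule is fully invariant if it is mapped into itself by every endomorphism of $A$. *)

theory Defs
  imports "HOL-Algebra.Algebra"
begin

text \<open>Left modules over an arbitrary (not necessarily commutative) ring with identity.
  The library locale module requires a commutative ring, so we use the same axioms over ring R.\<close>

locale left_module = R?: ring R + M?: abelian_group M
  for R :: "('r, 's) ring_scheme" (structure) and M :: "('r, 'e, 'm) module_scheme" (structure) +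
  assumes smult_closed [simp, intro]:
      "\<lbrakk> a \<in> carrier R; x \<in> carrier M \<rbrakk> \<Longrightarrow> a \<odot>\<^bsub>M\<^esub> x \<in> carrier M"
    and smult_l_distr:
      "\<lbrakk> a \<in> carrier R; b \<in> carrier R; x \<in> carrier M \<rbrakk> \<Longrightarrow>
      (a \<oplus> b) \<odot>\<^bsub>M\<^esub> x = a \<odot>\<^bsub>M\<^esub> x \<oplus>\<^bsub>M\<^esub> b \<odot>\<^bsub>M\<^esub> x"
    and smult_r_distr:
      "\<lbrakk> a \<in> carrier R; x \<in> carrier M; y \<in> carrier M \<rbrakk> \<Longrightarrow>
      a \<odot>\<^bsub>M\<^esub> (x \<oplus>\<^bsub>M\<^esub> y) = a \<odot>\<^bsub>M\<^esub> x \<oplus>\<^bsub>M\<^esub> a \<odot>\<^bsub>M\<^esub> y"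
    and smult_assoc1:
      "\<lbrakk> a \<in> carrier R; b \<in> carrier R; x \<in> carrier M \<rbrakk> \<Longrightarrow>
      (a \<otimes> b) \<odot>\<^bsub>M\<^esub> x = a \<odot>\<^bsub>M\<^esub> (b \<odot>\<^bsub>M\<^esub> x)"
    and smult_one [simp]:
      "x \<in> carrier M \<Longrightarrow> \<one> \<odot>\<^bsub>M\<^esub> x = x"

definition submod :: "('a, 'c) ring_scheme \<Rightarrow> ('a, 'b, 'd) module_scheme \<Rightarrow> 'b set \<Rightarrow> bool" where
  "submod R M N \<longleftrightarrow> N \<subseteq> carrier M \<and> \<zero>\<^bsub>M\<^esub> \<in> N
     \<and> (\<forall>x\<in>N. \<forall>y\<in>N. x \<oplus>\<^bsub>M\<^esub> y \<in> N)
     \<and> (\<forall>x\<in>N. \<ominus>\<^bsub>M\<^esub> x \<in> N)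
     \<and> (\<forall>a\<in>carrier R. \<forall>x\<in>N. a \<odot>\<^bsub>M\<^esub> x \<in> N)"

definition mod_end :: "('a, 'c) ring_scheme \<Rightarrow> ('a, 'b, 'd) module_scheme \<Rightarrow> ('b \<Rightarrow> 'b) set" where
  "mod_end R M = {f. f \<in> carrier M \<rightarrow>\<^sub>E carrier M
     \<and> (\<forall>x\<in>carrier M. \<forall>y\<in>carrier M. f (x \<oplus>\<^bsub>M\<^esub> y) = f x \<oplus>\<^bsub>M\<^esub> f y)
     \<and> (\<forall>a\<in>carrier R. \<forall>x\<in>carrier M. f (a \<odot>\<^bsub>M\<^esub> x) = a \<odot>\<^bsub>M\<^esub> f x)}"

definition End_ring :: "('a, 'c) ring_scheme \<Rightarrow> ('a, 'b, 'd) module_scheme \<Rightarrow> ('b \<Rightarrow> 'b) ring" where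
  "End_ring R M = \<lparr> carrier = mod_end R M,
      monoid.mult = (\<lambda>f g. compose (carrier M) f g),
      monoid.one = (\<lambda>x\<in>carrier M. x),
      ring.zero = (\<lambda>x\<in>carrier M. \<zero>\<^bsub>M\<^esub>),
      ring.add = (\<lambda>f g. \<lambda>x\<in>carrier M. f x \<oplus>\<^bsub>M\<^esub> g x) \<rparr>"

definition ring_center :: "('a, 'c) ring_scheme \<Rightarrow> 'a set" where
  "ring_center S = {z \<in> carrier S. \<forall>b\<in>carrier S. z \<otimes>\<^bsub>S\<^esub> b = b \<otimes>\<^bsub>S\<^esub> z}"

definition centrally_essential :: "('a, 'c) ring_scheme \<Rightarrow> bool" where
  "centrally_essential S \<longleftrightarrow> (\<forall>a\<in>carrier S. a \<noteq> \<zero>\<^bsub>S\<^esub> \<longrightarrow>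
     (\<exists>x\<in>ring_center S. \<exists>y\<in>ring_center S. x \<noteq> \<zero>\<^bsub>S\<^esub> \<and> y \<noteq> \<zero>\<^bsub>S\<^esub> \<and> a \<otimes>\<^bsub>S\<^esub> x = y))"

definition fully_invariant :: "('a, 'c) ring_scheme \<Rightarrow> ('a, 'b, 'd) module_scheme \<Rightarrow> 'b set \<Rightarrow> bool" where
  "fully_invariant R M N \<longleftrightarrow> submod R M N \<and> (\<forall>f\<in>mod_end R M. f ` N \<subseteq> N)"

definition direct_decomposition ::
  "('a, 'c) ring_scheme \<Rightarrow> ('a, 'b, 'd) module_scheme \<Rightarrow> 'i set \<Rightarrow> ('i \<Rightarrow> 'b set) \<Rightarrow> bool" where
  "direct_decomposition R M I A \<longleftrightarrow> (\<forall>i\<in>I. submod R M (A i))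
     \<and> (\<forall>x\<in>carrier M. \<exists>!c. c \<in> extensional I \<and> (\<forall>i\<in>I. c i \<in> A i)
          \<and> finite {i\<in>I. c i \<noteq> \<zero>\<^bsub>M\<^esub>}
          \<and> x = finsum M c {i\<in>I. c i \<noteq> \<zero>\<^bsub>M\<^esub>})"

end

theory Submission
  imports Defs
begin

text \<open>In a centrally essential ring every idempotent \<open>e\<close> is central: for any \<open>f\<close>, the elements
  \<open>f e - e f e\<close> and \<open>e f - e f e\<close> are annihilated by \<open>e\<close> on one side and fixed by it on the
  other, and a nonzero central multiple of such an element is impossible. So the projections onto
  the summands are central in \<open>End A\<close>; this makes every \<open>A\<^sub>i\<close> fully invariant, and endomorphisms
  can be moved between \<open>A\<^sub>i\<close> and \<open>A\<close> by restricting and by precomposing with the projection, both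
  of which preserve centrality and nonvanishing on \<open>A\<^sub>i\<close>. Conversely, if all \<open>A\<^sub>i\<close> are fully
  invariant, the projections commute with every endomorphism, and a nonzero endomorphism of \<open>A\<close>
  is nonzero on some \<open>A\<^sub>i\<close>, where its restriction has a central multiple that extends to \<open>A\<close>.\<close>

lemma (in ring) centrally_essential_right_annihilated:
  assumes ce: "centrally_essential R" and g: "g \<in> carrier R" and e: "e \<in> carrier R"
    and ge: "g \<otimes> e = g" and eg: "e \<otimes> g = \<zero>"
  shows "g = \<zero>"
proof (rule ccontr)
  assume "g \<noteq> \<zero>"
  then obtain x y where x: "x \<in> ring_center R" and y: "y \<in> ring_center R"
    and "y \<noteq> \<zero>" and gx: "g \<otimes> x = y"
    using ce g unfolding centrally_essential_def by blast
  have xc: "x \<in> carrier R" and xe: "e \<otimes> x = x \<otimes> e" using x e by (auto simp: ring_center_def)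
  have "y = g \<otimes> e \<otimes> x" using gx ge by simp
  also have "\<dots> = y \<otimes> e" using xe g e xc gx by (simp add: m_assoc flip: gx)
  also have "\<dots> = e \<otimes> g \<otimes> x" using y gx e g xc by (simp add: ring_center_def m_assoc)
  also have "\<dots> = \<zero>" using eg xc by simp
  finally show False using \<open>y \<noteq> \<zero>\<close> by contradiction
qed

lemma (in ring) centrally_essential_left_annihilated:
  assumes ce: "centrally_essential R" and g: "g \<in> carrier R" and e: "e \<in> carrier R"
    and eg: "e \<otimes> g = g" and ge: "g \<otimes> e = \<zero>"
  shows "g = \<zero>"
proof (rule ccontr)
  assume "g \<noteq> \<zero>"
  then obtain x y where x: "x \<in> ring_center R" and y: "y \<in> ring_center R"
    and "y \<noteq> \<zero>" and gx: "g \<otimes> x = y"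
    using ce g unfolding centrally_essential_def by blast
  have xc: "x \<in> carrier R" and xe: "e \<otimes> x = x \<otimes> e" using x e by (auto simp: ring_center_def)
  have "y = e \<otimes> g \<otimes> x" using gx eg by simp
  also have "\<dots> = y \<otimes> e" using y gx e g xc by (simp add: ring_center_def m_assoc)
  also have "\<dots> = g \<otimes> e \<otimes> x" using xe g e xc gx by (simp add: m_assoc flip: gx)
  also have "\<dots> = \<zero>" using ge xc by simp
  finally show False using \<open>y \<noteq> \<zero>\<close> by contradiction
qed

lemma (in ring) idempotent_in_center_if_centrally_essential:
  assumes ce: "centrally_essential R" and e: "e \<in> carrier R" and ee: "e \<otimes> e = e"
  shows "e \<in> ring_center R"
  unfolding ring_center_def
proof (intro CollectI conjI ballI e)
  fix f assume f: "f \<in> carrier R"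
  have eee: "e \<otimes> (e \<otimes> f) = e \<otimes> f" "f \<otimes> e \<otimes> e = f \<otimes> e"
    using ee e f by (simp_all flip: m_assoc add: m_assoc)
  have "f \<otimes> e \<ominus> e \<otimes> f \<otimes> e = \<zero>"
  proof (rule centrally_essential_right_annihilated[OF ce _ e])
    show "(f \<otimes> e \<ominus> e \<otimes> f \<otimes> e) \<otimes> e = f \<otimes> e \<ominus> e \<otimes> f \<otimes> e"
      using e f eee by (simp add: minus_eq l_distr l_minus m_assoc)
    show "e \<otimes> (f \<otimes> e \<ominus> e \<otimes> f \<otimes> e) = \<zero>"
      using e f eee by (simp add: minus_eq r_distr r_minus m_assoc[symmetric] r_neg)
  qed (use e f in simp)
  moreover have "e \<otimes> f \<ominus> e \<otimes> f \<otimes> e = \<zero>"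
  proof (rule centrally_essential_left_annihilated[OF ce _ e])
    show "e \<otimes> (e \<otimes> f \<ominus> e \<otimes> f \<otimes> e) = e \<otimes> f \<ominus> e \<otimes> f \<otimes> e"
      using e f eee by (simp add: minus_eq r_distr r_minus m_assoc[symmetric])
    show "(e \<otimes> f \<ominus> e \<otimes> f \<otimes> e) \<otimes> e = \<zero>"
      using e f eee by (simp add: minus_eq l_distr l_minus m_assoc r_neg)
  qed (use e f in simp)
  ultimately show "e \<otimes> f = f \<otimes> e"
    using e f by (metis r_right_minus_eq m_closed)
qed

lemma (in abelian_group) abelian_group_hom_endoI:
  assumes "h \<in> carrier G \<rightarrow> carrier G"
    and "\<And>x y. x \<in> carrier G \<Longrightarrow> y \<in> carrier G \<Longrightarrow> h (x \<oplus> y) = h x \<oplus> h y"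
  shows "abelian_group_hom G G h"
  using assms
  by (intro abelian_group_homI abelian_group_axioms group_hom.intro group_hom_axioms.intro a_group homI)
    auto

lemma (in abelian_group_hom) hom_finsum:
  assumes "finite S" and "c \<in> S \<rightarrow> carrier G"
  shows "h (finsum G c S) = finsum H (h \<circ> c) S"
  using assms by (induction S rule: finite_induct) (simp_all add: G.finsum_insert H.finsum_insert Pi_iff)

lemma mod_end_closed: "f \<in> mod_end R M \<Longrightarrow> x \<in> carrier M \<Longrightarrow> f x \<in> carrier M"
  unfolding mod_end_def by auto

lemma mod_end_add:
  "f \<in> mod_end R M \<Longrightarrow> x \<in> carrier M \<Longrightarrow> y \<in> carrier M \<Longrightarrow> f (x \<oplus>\<^bsub>M\<^esub> y) = f x \<oplus>\<^bsub>M\<^esub> f y"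
  unfolding mod_end_def by auto

lemma mod_end_smult:
  "f \<in> mod_end R M \<Longrightarrow> a \<in> carrier R \<Longrightarrow> x \<in> carrier M \<Longrightarrow> f (a \<odot>\<^bsub>M\<^esub> x) = a \<odot>\<^bsub>M\<^esub> f x"
  unfolding mod_end_def by auto

lemma mod_end_eqI:
  assumes "f \<in> mod_end R M" and "g \<in> mod_end R M" and "\<And>x. x \<in> carrier M \<Longrightarrow> f x = g x"
  shows "f = g"
  using assms unfolding mod_end_def by (intro extensionalityI[of _ "carrier M"]) (auto simp: PiE_iff)

lemma mod_end_ne_zero_iff:
  "f \<in> mod_end R M \<Longrightarrow> f \<noteq> (\<lambda>x\<in>carrier M. \<zero>\<^bsub>M\<^esub>) \<longleftrightarrow> (\<exists>x\<in>carrier M. f x \<noteq> \<zero>\<^bsub>M\<^esub>)"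
  unfolding mod_end_def by (auto simp: fun_eq_iff PiE_def extensional_def)

lemma mod_end_compose_eqI:
  assumes "y \<in> mod_end R M" and "\<And>x. x \<in> carrier M \<Longrightarrow> f (g x) = y x"
  shows "compose (carrier M) f g = y"
  using assms unfolding mod_end_def
  by (intro extensionalityI[of _ "carrier M"]) (auto simp: PiE_iff compose_eq)

lemma End_ring_simps [simp]:
  "carrier (End_ring R M) = mod_end R M"
  "f \<otimes>\<^bsub>End_ring R M\<^esub> g = compose (carrier M) f g"
  "\<one>\<^bsub>End_ring R M\<^esub> = (\<lambda>x\<in>carrier M. x)"
  "\<zero>\<^bsub>End_ring R M\<^esub> = (\<lambda>x\<in>carrier M. \<zero>\<^bsub>M\<^esub>)"
  "f \<oplus>\<^bsub>End_ring R M\<^esub> g = (\<lambda>x\<in>carrier M. f x \<oplus>\<^bsub>M\<^esub> g x)"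
  by (simp_all add: End_ring_def)

lemma compose_commute_iff:
  "compose A f g = compose A g f \<longleftrightarrow> (\<forall>x\<in>A. f (g x) = g (f x))"
proof
  assume "compose A f g = compose A g f"
  then show "\<forall>x\<in>A. f (g x) = g (f x)"
    by (metis compose_eq)
qed (simp add: compose_def cong: restrict_cong)

lemma in_center_End_ring_iff:
  "z \<in> ring_center (End_ring R M) \<longleftrightarrow>
     z \<in> mod_end R M \<and> (\<forall>f\<in>mod_end R M. \<forall>x\<in>carrier M. z (f x) = f (z x))"
  unfolding ring_center_def End_ring_simps compose_commute_iff by blast

context left_module
begin

lemma mod_end_abelian_group_hom: "f \<in> mod_end R M \<Longrightarrow> abelian_group_hom M M f"
  by (rule M.abelian_group_hom_endoI) (auto simp: mod_end_closed mod_end_add)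

lemma smult_abelian_group_hom: "a \<in> carrier R \<Longrightarrow> abelian_group_hom M M (\<lambda>x. a \<odot>\<^bsub>M\<^esub> x)"
  by (rule M.abelian_group_hom_endoI) (auto simp: smult_r_distr)

lemma mod_end_zero: "f \<in> mod_end R M \<Longrightarrow> f \<zero>\<^bsub>M\<^esub> = \<zero>\<^bsub>M\<^esub>"
  using abelian_group_hom.hom_zero[OF mod_end_abelian_group_hom] .

lemma mod_end_compose:
  "f \<in> mod_end R M \<Longrightarrow> g \<in> mod_end R M \<Longrightarrow> compose (carrier M) f g \<in> mod_end R M"
  by (auto simp: mod_end_def compose_def PiE_iff)

lemma mod_end_id: "(\<lambda>x\<in>carrier M. x) \<in> mod_end R M"
  by (simp add: mod_end_def)

lemma smult_zero: "a \<in> carrier R \<Longrightarrow> a \<odot>\<^bsub>M\<^esub> \<zero>\<^bsub>M\<^esub> = \<zero>\<^bsub>M\<^esub>"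
  using abelian_group_hom.hom_zero[OF smult_abelian_group_hom] .

lemma mod_end_zero_map: "(\<lambda>x\<in>carrier M. \<zero>\<^bsub>M\<^esub>) \<in> mod_end R M"
  by (simp add: mod_end_def smult_zero)

lemma mod_end_add_map:
  assumes "f \<in> mod_end R M" and "g \<in> mod_end R M"
  shows "(\<lambda>x\<in>carrier M. f x \<oplus>\<^bsub>M\<^esub> g x) \<in> mod_end R M"
  using assms by (subst mod_end_def) (auto simp: mod_end_closed mod_end_add mod_end_smult smult_r_distr M.a_ac)

lemma mod_end_neg_map:
  assumes f: "f \<in> mod_end R M"
  shows "(\<lambda>x\<in>carrier M. \<ominus>\<^bsub>M\<^esub> f x) \<in> mod_end R M"
proof -
  have "a \<odot>\<^bsub>M\<^esub> (\<ominus>\<^bsub>M\<^esub> f x) = \<ominus>\<^bsub>M\<^esub> (a \<odot>\<^bsub>M\<^esub> f x)" if "a \<in> carrier R" "x \<in> carrier M" for a x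
    using abelian_group_hom.hom_a_inv[OF smult_abelian_group_hom[OF that(1)]] that f
    by (simp add: mod_end_closed)
  then show ?thesis
    using f by (subst mod_end_def) (auto simp: mod_end_closed mod_end_add mod_end_smult M.minus_add M.a_comm)
qed

lemma ring_End_ring: "ring (End_ring R M)"
proof (rule ringI)
  show "abelian_group (End_ring R M)"
  proof (rule abelian_groupI, simp_all only: End_ring_simps)
    show "(\<lambda>x\<in>carrier M. (\<lambda>x\<in>carrier M. \<zero>\<^bsub>M\<^esub>) x \<oplus>\<^bsub>M\<^esub> f x) = f"
      if "f \<in> mod_end R M" for f
      using that mod_end_eqI[OF mod_end_add_map[OF mod_end_zero_map that] that] by (simp add: mod_end_closed)
    show "\<exists>g\<in>mod_end R M. (\<lambda>x\<in>carrier M. g x \<oplus>\<^bsub>M\<^esub> f x) = (\<lambda>x\<in>carrier M. \<zero>\<^bsub>M\<^esub>)"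
      if "f \<in> mod_end R M" for f
      using that mod_end_neg_map
      by (intro bexI[of _ "\<lambda>x\<in>carrier M. \<ominus>\<^bsub>M\<^esub> f x"] restrict_ext) (simp_all add: mod_end_closed M.l_neg)
  qed (auto intro!: restrict_ext mod_end_add_map mod_end_zero_map simp: mod_end_closed M.a_ac)
  show "monoid (End_ring R M)"
  proof (rule monoidI, simp_all only: End_ring_simps)
    show "compose (carrier M) (\<lambda>x\<in>carrier M. x) f = f" "compose (carrier M) f (\<lambda>x\<in>carrier M. x) = f"
      if "f \<in> mod_end R M" for f
      using that mod_end_eqI[OF mod_end_compose[OF mod_end_id that] that]
        mod_end_eqI[OF mod_end_compose[OF that mod_end_id] that]
      by (simp_all add: compose_eq mod_end_closed)
    show "compose (carrier M) (compose (carrier M) f g) h = compose (carrier M) f (compose (carrier M) g h)"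
      if "h \<in> mod_end R M" for f g h
      using that by (intro compose_assoc[symmetric]) (auto simp: mod_end_closed)
  qed (simp_all add: mod_end_compose mod_end_id)
qed (auto intro!: restrict_ext simp: compose_def mod_end_closed mod_end_add)

end

locale central_retract = left_module R M
  for R :: "('a, 'c) ring_scheme" and M :: "('a, 'b, 'd) module_scheme" +
  fixes N :: "'b set" and p :: "'b \<Rightarrow> 'b"
  assumes retract_subset: "N \<subseteq> carrier M"
    and retraction_central: "p \<in> ring_center (End_ring R M)"
    and retraction_range: "\<And>x. x \<in> carrier M \<Longrightarrow> p x \<in> N"
    and retraction_fixes: "\<And>w. w \<in> N \<Longrightarrow> p w = w"
begin

lemma retraction_mod_end: "p \<in> mod_end R M"
  using retraction_central by (simp add: in_center_End_ring_iff)

lemma retraction_commute: "f \<in> mod_end R M \<Longrightarrow> x \<in> carrier M \<Longrightarrow> p (f x) = f (p x)"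
  using retraction_central by (simp add: in_center_End_ring_iff)

lemma retract_elem_closed: "w \<in> N \<Longrightarrow> w \<in> carrier M"
  using retract_subset by blast

lemma mod_end_preserves_retract:
  assumes f: "f \<in> mod_end R M" and w: "w \<in> N"
  shows "f w \<in> N"
proof -
  have "f w = p (f w)"
    using retraction_commute[OF f retract_elem_closed[OF w]] retraction_fixes[OF w] by simp
  then show ?thesis
    using retraction_range mod_end_closed[OF f retract_elem_closed[OF w]] by metis
qed

lemma retract_image_closed:
  assumes "x \<in> carrier M" and "p x = x"
  shows "x \<in> N"
  using assms retraction_range by metis

lemma submod_retract: "submod R M N"
proof -
  interpret p: abelian_group_hom M M p
    using mod_end_abelian_group_hom[OF retraction_mod_end] .
  show ?thesis
    unfolding submod_def
    by (auto intro!: retract_image_closed retract_subset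
        simp: retract_elem_closed retraction_fixes mod_end_smult[OF retraction_mod_end])
qed

lemma fully_invariant_retract: "fully_invariant R M N"
  unfolding fully_invariant_def using submod_retract mod_end_preserves_retract by blast

lemma restrict_mod_end: "f \<in> mod_end R M \<Longrightarrow> restrict f N \<in> mod_end R (M\<lparr>carrier := N\<rparr>)"
  using submod_retract mod_end_preserves_retract
  by (auto simp: mod_end_def submod_def retract_elem_closed)

definition extend :: "('b \<Rightarrow> 'b) \<Rightarrow> 'b \<Rightarrow> 'b"
  where "extend t = (\<lambda>x\<in>carrier M. t (p x))"

lemma extend_on_retract [simp]: "w \<in> N \<Longrightarrow> extend t w = t w"
  by (simp add: extend_def retract_elem_closed retraction_fixes)

lemma extend_mod_end:
  assumes t: "t \<in> mod_end R (M\<lparr>carrier := N\<rparr>)"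
  shows "extend t \<in> mod_end R M"
  using t retraction_range retract_elem_closed
  by (subst mod_end_def)
    (auto simp: extend_def mod_end_def mod_end_add[OF retraction_mod_end]
      mod_end_smult[OF retraction_mod_end])

lemma extend_ne_zero:
  assumes t: "t \<in> mod_end R (M\<lparr>carrier := N\<rparr>)" and "t \<noteq> \<zero>\<^bsub>End_ring R (M\<lparr>carrier := N\<rparr>)\<^esub>"
  shows "extend t \<noteq> \<zero>\<^bsub>End_ring R M\<^esub>"
proof -
  obtain w where w: "w \<in> N" "t w \<noteq> \<zero>\<^bsub>M\<^esub>"
    using assms mod_end_ne_zero_iff[OF t] by auto
  then have "\<exists>x\<in>carrier M. extend t x \<noteq> \<zero>\<^bsub>M\<^esub>"
    by (intro bexI[of _ w]) (simp_all add: retract_elem_closed)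
  then show ?thesis
    unfolding End_ring_simps mod_end_ne_zero_iff[OF extend_mod_end[OF t]] .
qed

lemma restrict_center:
  assumes z: "z \<in> ring_center (End_ring R M)"
  shows "restrict z N \<in> ring_center (End_ring R (M\<lparr>carrier := N\<rparr>))"
proof -
  have z_mod_end: "z \<in> mod_end R M"
    using z by (simp add: in_center_End_ring_iff)
  have "z (t w) = t (z w)" if t: "t \<in> mod_end R (M\<lparr>carrier := N\<rparr>)" and w: "w \<in> N" for t w
  proof -
    have "z (extend t w) = extend t (z w)"
      using z extend_mod_end[OF t] retract_elem_closed[OF w] by (simp add: in_center_End_ring_iff)
    then show ?thesis
      using w mod_end_preserves_retract[OF z_mod_end w] by simp
  qed
  then show ?thesis
    using restrict_mod_end[OF z_mod_end] mod_end_closed[of _ R "M\<lparr>carrier := N\<rparr>"]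
    by (auto simp: in_center_End_ring_iff)
qed

lemma extend_center:
  assumes t: "t \<in> ring_center (End_ring R (M\<lparr>carrier := N\<rparr>))"
  shows "extend t \<in> ring_center (End_ring R M)"
proof -
  have t_mod_end: "t \<in> mod_end R (M\<lparr>carrier := N\<rparr>)"
    using t by (simp add: in_center_End_ring_iff)
  have t_commute: "\<forall>g\<in>mod_end R (M\<lparr>carrier := N\<rparr>). \<forall>w\<in>N. t (g w) = g (t w)"
    using t by (simp add: in_center_End_ring_iff)
  have "extend t (f x) = f (extend t x)" if f: "f \<in> mod_end R M" and x: "x \<in> carrier M" for f x
  proof -
    have px: "p x \<in> N"
      using retraction_range[OF x] .
    have "extend t (f x) = t (restrict f N (p x))"
      using f x px by (simp add: extend_def mod_end_closed retraction_commute)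
    also have "\<dots> = restrict f N (t (p x))"
      using t_commute restrict_mod_end[OF f] px by blast
    also have "\<dots> = f (extend t x)"
      using t_mod_end px x mod_end_closed[of t R "M\<lparr>carrier := N\<rparr>"] by (simp add: extend_def)
    finally show ?thesis .
  qed
  then show ?thesis
    using extend_mod_end[OF t_mod_end] by (simp add: in_center_End_ring_iff)
qed

lemma retract_mod_end_zero: "t \<in> mod_end R (M\<lparr>carrier := N\<rparr>) \<Longrightarrow> t \<zero>\<^bsub>M\<^esub> = \<zero>\<^bsub>M\<^esub>"
  using mod_end_zero[OF extend_mod_end] submod_retract by (simp add: submod_def)

lemma restrict_ne_zero:
  assumes y: "y \<in> mod_end R M" and y_ne: "y \<noteq> \<zero>\<^bsub>End_ring R M\<^esub>"
    and y_range: "\<And>x. x \<in> carrier M \<Longrightarrow> y x \<in> N"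
  shows "restrict y N \<noteq> \<zero>\<^bsub>End_ring R (M\<lparr>carrier := N\<rparr>)\<^esub>"
proof -
  obtain x where x: "x \<in> carrier M" and "y x \<noteq> \<zero>\<^bsub>M\<^esub>"
    using y_ne mod_end_ne_zero_iff[OF y] by auto
  moreover have "y (p x) = y x"
    using retraction_commute[OF y x] retraction_fixes[OF y_range[OF x]] by simp
  ultimately show ?thesis
    using mod_end_ne_zero_iff[OF restrict_mod_end[OF y]] retraction_range[OF x] by auto
qed

lemma centrally_essential_End_retract:
  assumes ce: "centrally_essential (End_ring R M)"
  shows "centrally_essential (End_ring R (M\<lparr>carrier := N\<rparr>))"
  unfolding centrally_essential_def
proof (intro ballI impI)
  fix a
  assume "a \<in> carrier (End_ring R (M\<lparr>carrier := N\<rparr>))"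
    and a_ne: "a \<noteq> \<zero>\<^bsub>End_ring R (M\<lparr>carrier := N\<rparr>)\<^esub>"
  then have a: "a \<in> mod_end R (M\<lparr>carrier := N\<rparr>)"
    by simp
  have "extend a \<in> carrier (End_ring R M)"
    using extend_mod_end[OF a] by simp
  then obtain x y where x: "x \<in> ring_center (End_ring R M)" and y: "y \<in> ring_center (End_ring R M)"
    and y_ne: "y \<noteq> \<zero>\<^bsub>End_ring R M\<^esub>" and axy: "extend a \<otimes>\<^bsub>End_ring R M\<^esub> x = y"
    using ce extend_ne_zero[OF a a_ne] unfolding centrally_essential_def by blast
  have x_mod_end: "x \<in> mod_end R M" and y_mod_end: "y \<in> mod_end R M"
    using x y by (simp_all add: in_center_End_ring_iff)
  have y_eq: "y v = a (p (x v))" if "v \<in> carrier M" for v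
    using axy that mod_end_closed[OF x_mod_end that] by (auto simp: extend_def compose_eq)
  have a_x_N: "a \<otimes>\<^bsub>End_ring R (M\<lparr>carrier := N\<rparr>)\<^esub> restrict x N = restrict y N"
    unfolding End_ring_simps
    by (rule mod_end_compose_eqI[OF restrict_mod_end[OF y_mod_end]])
      (simp add: y_eq retract_elem_closed retraction_fixes mod_end_preserves_retract[OF x_mod_end])
  have y_N_ne: "restrict y N \<noteq> \<zero>\<^bsub>End_ring R (M\<lparr>carrier := N\<rparr>)\<^esub>"
    using y_eq retraction_range mod_end_closed[OF x_mod_end] mod_end_closed[OF a]
    by (intro restrict_ne_zero[OF y_mod_end y_ne]) simp
  have x_N_ne: "restrict x N \<noteq> \<zero>\<^bsub>End_ring R (M\<lparr>carrier := N\<rparr>)\<^esub>"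
  proof
    assume "restrict x N = \<zero>\<^bsub>End_ring R (M\<lparr>carrier := N\<rparr>)\<^esub>"
    then have "restrict y N = compose N a (\<lambda>w\<in>N. \<zero>\<^bsub>M\<^esub>)"
      using a_x_N by simp
    also have "\<dots> = \<zero>\<^bsub>End_ring R (M\<lparr>carrier := N\<rparr>)\<^esub>"
      by (simp add: compose_def retract_mod_end_zero[OF a] cong: restrict_cong)
    finally show False
      using y_N_ne by contradiction
  qed
  show "\<exists>x\<in>ring_center (End_ring R (M\<lparr>carrier := N\<rparr>)). \<exists>y\<in>ring_center (End_ring R (M\<lparr>carrier := N\<rparr>)).
    x \<noteq> \<zero>\<^bsub>End_ring R (M\<lparr>carrier := N\<rparr>)\<^esub> \<and> y \<noteq> \<zero>\<^bsub>End_ring R (M\<lparr>carrier := N\<rparr>)\<^esub> \<and>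
    a \<otimes>\<^bsub>End_ring R (M\<lparr>carrier := N\<rparr>)\<^esub> x = y"
    using restrict_center x y x_N_ne y_N_ne a_x_N by blast
qed

lemma central_multiple_if_nonzero_on_retract:
  assumes ce: "centrally_essential (End_ring R (M\<lparr>carrier := N\<rparr>))"
    and a: "a \<in> mod_end R M" and w: "w \<in> N" and aw: "a w \<noteq> \<zero>\<^bsub>M\<^esub>"
  shows "\<exists>x\<in>ring_center (End_ring R M). \<exists>y\<in>ring_center (End_ring R M).
    x \<noteq> \<zero>\<^bsub>End_ring R M\<^esub> \<and> y \<noteq> \<zero>\<^bsub>End_ring R M\<^esub> \<and> a \<otimes>\<^bsub>End_ring R M\<^esub> x = y"
proof -
  have a_N: "restrict a N \<in> mod_end R (M\<lparr>carrier := N\<rparr>)"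
    using restrict_mod_end[OF a] .
  have "restrict a N \<in> carrier (End_ring R (M\<lparr>carrier := N\<rparr>))"
    "restrict a N \<noteq> \<zero>\<^bsub>End_ring R (M\<lparr>carrier := N\<rparr>)\<^esub>"
    using a_N w aw mod_end_ne_zero_iff[OF a_N] by auto
  then obtain x y where x: "x \<in> ring_center (End_ring R (M\<lparr>carrier := N\<rparr>))"
    and y: "y \<in> ring_center (End_ring R (M\<lparr>carrier := N\<rparr>))"
    and x_ne: "x \<noteq> \<zero>\<^bsub>End_ring R (M\<lparr>carrier := N\<rparr>)\<^esub>" and y_ne: "y \<noteq> \<zero>\<^bsub>End_ring R (M\<lparr>carrier := N\<rparr>)\<^esub>"
    and axy: "restrict a N \<otimes>\<^bsub>End_ring R (M\<lparr>carrier := N\<rparr>)\<^esub> x = y"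
    using ce unfolding centrally_essential_def by blast
  have x_mod_end: "x \<in> mod_end R (M\<lparr>carrier := N\<rparr>)" and y_mod_end: "y \<in> mod_end R (M\<lparr>carrier := N\<rparr>)"
    using x y by (simp_all add: in_center_End_ring_iff)
  have a_x: "a (x u) = y u" if "u \<in> N" for u
    using axy that mod_end_closed[OF x_mod_end, of u] by (auto simp: compose_eq)
  show ?thesis
  proof (intro bexI conjI)
    show "extend x \<noteq> \<zero>\<^bsub>End_ring R M\<^esub>" "extend y \<noteq> \<zero>\<^bsub>End_ring R M\<^esub>"
      using extend_ne_zero x_mod_end y_mod_end x_ne y_ne by blast+
    show "a \<otimes>\<^bsub>End_ring R M\<^esub> extend x = extend y"
      unfolding End_ring_simps
      by (rule mod_end_compose_eqI[OF extend_mod_end[OF y_mod_end]])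
        (simp add: extend_def a_x retraction_range)
  qed (use x y extend_center in blast)+
qed

end

locale decomposed_module = left_module R M
  for R :: "('a, 'c) ring_scheme" and M :: "('a, 'b, 'd) module_scheme" +
  fixes I :: "'i set" and A :: "'i \<Rightarrow> 'b set"
  assumes decomposition: "direct_decomposition R M I A"
begin

lemma summand_submod: "i \<in> I \<Longrightarrow> submod R M (A i)"
  using decomposition by (simp add: direct_decomposition_def)

lemma summand_subset: "i \<in> I \<Longrightarrow> A i \<subseteq> carrier M"
  using summand_submod by (simp add: submod_def)

lemma summand_zero: "i \<in> I \<Longrightarrow> \<zero>\<^bsub>M\<^esub> \<in> A i"
  using summand_submod by (simp add: submod_def)

lemma summand_add: "i \<in> I \<Longrightarrow> x \<in> A i \<Longrightarrow> y \<in> A i \<Longrightarrow> x \<oplus>\<^bsub>M\<^esub> y \<in> A i"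
  using summand_submod by (simp add: submod_def)

lemma summand_smult: "i \<in> I \<Longrightarrow> a \<in> carrier R \<Longrightarrow> x \<in> A i \<Longrightarrow> a \<odot>\<^bsub>M\<^esub> x \<in> A i"
  using summand_submod by (simp add: submod_def)

definition is_components :: "'b \<Rightarrow> ('i \<Rightarrow> 'b) \<Rightarrow> bool"
  where "is_components z c \<longleftrightarrow> c \<in> extensional I \<and> (\<forall>i\<in>I. c i \<in> A i)
    \<and> finite {i\<in>I. c i \<noteq> \<zero>\<^bsub>M\<^esub>} \<and> z = finsum M c {i\<in>I. c i \<noteq> \<zero>\<^bsub>M\<^esub>}"

definition components :: "'b \<Rightarrow> 'i \<Rightarrow> 'b"
  where "components z = (THE c. is_components z c)"

lemma ex1_components: "z \<in> carrier M \<Longrightarrow> \<exists>!c. is_components z c"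
  using decomposition unfolding direct_decomposition_def is_components_def by blast

lemma is_components_components: "z \<in> carrier M \<Longrightarrow> is_components z (components z)"
  unfolding components_def by (rule theI'[OF ex1_components])

lemma components_in_summand: "z \<in> carrier M \<Longrightarrow> i \<in> I \<Longrightarrow> components z i \<in> A i"
  using is_components_components by (simp add: is_components_def)

lemma components_closed: "z \<in> carrier M \<Longrightarrow> i \<in> I \<Longrightarrow> components z i \<in> carrier M"
  using components_in_summand summand_subset by blast

lemma finite_components_support: "z \<in> carrier M \<Longrightarrow> finite {i\<in>I. components z i \<noteq> \<zero>\<^bsub>M\<^esub>}"
  using is_components_components by (simp add: is_components_def)

lemma finsum_components:
  assumes z: "z \<in> carrier M" and S: "finite S" "{i\<in>I. components z i \<noteq> \<zero>\<^bsub>M\<^esub>} \<subseteq> S" "S \<subseteq> I"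
  shows "finsum M (components z) S = z"
proof -
  have "finsum M (components z) S = finsum M (components z) {i\<in>I. components z i \<noteq> \<zero>\<^bsub>M\<^esub>}"
    by (rule M.add.finprod_mono_neutral_cong_right) (use S z components_closed in auto)
  also have "\<dots> = z"
    using is_components_components[OF z] by (simp add: is_components_def)
  finally show ?thesis .
qed

lemma components_finsum:
  assumes c: "c \<in> extensional I" "\<And>i. i \<in> I \<Longrightarrow> c i \<in> A i"
    and S: "finite S" "S \<subseteq> I" "\<And>i. i \<in> I - S \<Longrightarrow> c i = \<zero>\<^bsub>M\<^esub>"
  shows "components (finsum M c S) = c"
proof -
  have support: "{i\<in>I. c i \<noteq> \<zero>\<^bsub>M\<^esub>} \<subseteq> S"
    using S by blast
  have c_closed: "c \<in> S \<rightarrow> carrier M"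
    using c S summand_subset by blast
  have "finsum M c {i\<in>I. c i \<noteq> \<zero>\<^bsub>M\<^esub>} = finsum M c S"
    by (rule M.add.finprod_mono_neutral_cong_left) (use S support c_closed in auto)
  then have "is_components (finsum M c S) c"
    unfolding is_components_def using c S support finite_subset by auto
  then show ?thesis
    unfolding components_def
    by (rule the1_equality[OF ex1_components[OF M.finsum_closed[OF c_closed]]])
qed

lemma components_summand_elem:
  assumes j: "j \<in> I" and w: "w \<in> A j"
  shows "components w = (\<lambda>i\<in>I. if i = j then w else \<zero>\<^bsub>M\<^esub>)"
proof -
  have "w \<in> carrier M"
    using j w summand_subset by blast
  then have "finsum M (\<lambda>i\<in>I. if i = j then w else \<zero>\<^bsub>M\<^esub>) {j} = w"
    using j by (simp add: M.finsum_insert)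
  then show ?thesis
    using components_finsum[of "\<lambda>i\<in>I. if i = j then w else \<zero>\<^bsub>M\<^esub>" "{j}"] j w summand_zero
    by auto
qed

lemma components_add:
  assumes z: "z \<in> carrier M" and w: "w \<in> carrier M"
  shows "components (z \<oplus>\<^bsub>M\<^esub> w) = (\<lambda>i\<in>I. components z i \<oplus>\<^bsub>M\<^esub> components w i)"
proof -
  let ?S = "{i\<in>I. components z i \<noteq> \<zero>\<^bsub>M\<^esub>} \<union> {i\<in>I. components w i \<noteq> \<zero>\<^bsub>M\<^esub>}"
  have S: "finite ?S" "?S \<subseteq> I"
    using finite_components_support z w by auto
  have closed: "components z \<in> ?S \<rightarrow> carrier M" "components w \<in> ?S \<rightarrow> carrier M"
    using components_closed z w by auto
  have "z \<oplus>\<^bsub>M\<^esub> w = finsum M (components z) ?S \<oplus>\<^bsub>M\<^esub> finsum M (components w) ?S"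
    using finsum_components z w S by simp
  also have "\<dots> = finsum M (\<lambda>i. components z i \<oplus>\<^bsub>M\<^esub> components w i) ?S"
    using M.finsum_addf[OF closed] by simp
  also have "\<dots> = finsum M (\<lambda>i\<in>I. components z i \<oplus>\<^bsub>M\<^esub> components w i) ?S"
    by (intro M.finsum_cong') (use S z w components_closed in auto)
  finally show ?thesis
    using components_finsum[OF _ _ S] summand_add components_in_summand z w by auto
qed

lemma components_hom:
  assumes h: "abelian_group_hom M M h" and h_summands: "\<And>i x. i \<in> I \<Longrightarrow> x \<in> A i \<Longrightarrow> h x \<in> A i"
    and z: "z \<in> carrier M"
  shows "components (h z) = (\<lambda>i\<in>I. h (components z i))"
proof -
  interpret h: abelian_group_hom M M h by (rule h)
  let ?S = "{i\<in>I. components z i \<noteq> \<zero>\<^bsub>M\<^esub>}"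
  have S: "finite ?S" "?S \<subseteq> I"
    using finite_components_support z by auto
  have "h z = h (finsum M (components z) ?S)"
    using finsum_components[OF z S(1) _ S(2)] by simp
  also have "\<dots> = finsum M (h \<circ> components z) ?S"
    using components_closed z by (intro h.hom_finsum S(1)) auto
  also have "\<dots> = finsum M (\<lambda>i\<in>I. h (components z i)) ?S"
    using components_closed z by (auto intro!: M.finsum_cong')
  finally show ?thesis
    using components_finsum[OF _ _ S] h_summands components_in_summand z by auto
qed

definition proj :: "'i \<Rightarrow> 'b \<Rightarrow> 'b"
  where "proj j = (\<lambda>z\<in>carrier M. components z j)"

lemma proj_in_summand: "j \<in> I \<Longrightarrow> z \<in> carrier M \<Longrightarrow> proj j z \<in> A j"
  by (simp add: proj_def components_in_summand)

lemma proj_on_summand: "j \<in> I \<Longrightarrow> w \<in> A j \<Longrightarrow> proj j w = w"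
  using summand_subset by (auto simp: proj_def components_summand_elem)

lemma proj_mod_end: "j \<in> I \<Longrightarrow> proj j \<in> mod_end R M"
  using proj_in_summand summand_subset
    components_hom[OF smult_abelian_group_hom summand_smult]
  by (auto simp: mod_end_def proj_def components_add)

lemma proj_idem: "j \<in> I \<Longrightarrow> proj j \<otimes>\<^bsub>End_ring R M\<^esub> proj j = proj j"
  using proj_mod_end proj_in_summand proj_on_summand
  by (auto intro!: mod_end_compose_eqI)

lemma proj_commute:
  assumes f: "f \<in> mod_end R M" and f_summands: "\<And>i x. i \<in> I \<Longrightarrow> x \<in> A i \<Longrightarrow> f x \<in> A i"
    and j: "j \<in> I" and z: "z \<in> carrier M"
  shows "proj j (f z) = f (proj j z)"
  using components_hom[OF mod_end_abelian_group_hom[OF f] f_summands z] j z mod_end_closed[OF f z]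
  by (simp add: proj_def)

lemma proj_central_if_fully_invariant:
  assumes "\<forall>i\<in>I. fully_invariant R M (A i)" and j: "j \<in> I"
  shows "proj j \<in> ring_center (End_ring R M)"
proof -
  have "\<And>f i x. f \<in> mod_end R M \<Longrightarrow> i \<in> I \<Longrightarrow> x \<in> A i \<Longrightarrow> f x \<in> A i"
    using assms(1) by (auto simp: fully_invariant_def)
  then show ?thesis
    using proj_mod_end[OF j] proj_commute[OF _ _ j] by (simp add: in_center_End_ring_iff)
qed

lemma central_retract_proj:
  "j \<in> I \<Longrightarrow> proj j \<in> ring_center (End_ring R M) \<Longrightarrow> central_retract R M (A j) (proj j)"
  using summand_subset proj_in_summand proj_on_summand
  by (intro central_retract.intro left_module_axioms central_retract_axioms.intro) auto

lemma mod_end_nonzero_on_summand: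
  assumes f: "f \<in> mod_end R M" and z: "z \<in> carrier M" and fz: "f z \<noteq> \<zero>\<^bsub>M\<^esub>"
  shows "\<exists>j\<in>I. \<exists>w\<in>A j. f w \<noteq> \<zero>\<^bsub>M\<^esub>"
proof (rule ccontr)
  assume "\<not> ?thesis"
  then have vanish: "f (components z i) = \<zero>\<^bsub>M\<^esub>" if "i \<in> I" for i
    using components_in_summand z that by blast
  let ?S = "{i\<in>I. components z i \<noteq> \<zero>\<^bsub>M\<^esub>}"
  have "f z = f (finsum M (components z) ?S)"
    using finsum_components[OF z finite_components_support[OF z]] by simp
  also have "\<dots> = finsum M (f \<circ> components z) ?S"
    using components_closed z
    by (intro abelian_group_hom.hom_finsum[OF mod_end_abelian_group_hom[OF f]] finite_components_support) auto
  also have "\<dots> = finsum M (\<lambda>i. \<zero>\<^bsub>M\<^esub>) ?S"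
    by (intro M.finsum_cong') (auto simp: vanish)
  also have "\<dots> = \<zero>\<^bsub>M\<^esub>"
    by simp
  finally show False
    using fz by contradiction
qed

lemma fully_invariant_and_centrally_essential_summand:
  assumes ce: "centrally_essential (End_ring R M)" and j: "j \<in> I"
  shows "fully_invariant R M (A j) \<and> centrally_essential (End_ring R (M\<lparr>carrier := A j\<rparr>))"
proof -
  have "proj j \<in> ring_center (End_ring R M)"
    using ring.idempotent_in_center_if_centrally_essential[OF ring_End_ring ce] proj_mod_end[OF j]
      proj_idem[OF j]
    by simp
  then interpret central_retract R M "A j" "proj j"
    by (rule central_retract_proj[OF j])
  show ?thesis
    using fully_invariant_retract centrally_essential_End_retract[OF ce] ..
qed

lemma centrally_essential_End_if_summands:
  assumes summands: "\<forall>i\<in>I. fully_invariant R M (A i) \<and> centrally_essential (End_ring R (M\<lparr>carrier := A i\<rparr>))"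
  shows "centrally_essential (End_ring R M)"
  unfolding centrally_essential_def
proof (intro ballI impI)
  fix a
  assume "a \<in> carrier (End_ring R M)" and a_ne: "a \<noteq> \<zero>\<^bsub>End_ring R M\<^esub>"
  then have a: "a \<in> mod_end R M"
    by simp
  then obtain z where "z \<in> carrier M" "a z \<noteq> \<zero>\<^bsub>M\<^esub>"
    using a_ne mod_end_ne_zero_iff[OF a] by auto
  then obtain j w where j: "j \<in> I" and w: "w \<in> A j" "a w \<noteq> \<zero>\<^bsub>M\<^esub>"
    using mod_end_nonzero_on_summand[OF a] by blast
  interpret central_retract R M "A j" "proj j"
    using proj_central_if_fully_invariant summands j by (intro central_retract_proj[OF j]) blast
  show "\<exists>x\<in>ring_center (End_ring R M). \<exists>y\<in>ring_center (End_ring R M).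
    x \<noteq> \<zero>\<^bsub>End_ring R M\<^esub> \<and> y \<noteq> \<zero>\<^bsub>End_ring R M\<^esub> \<and> a \<otimes>\<^bsub>End_ring R M\<^esub> x = y"
    using central_multiple_if_nonzero_on_retract summands j a w by blast
qed

end

theorem lemma2p1:
  fixes R :: "('a, 'c) ring_scheme" and M :: "('a, 'b, 'd) module_scheme"
    and I :: "'i set" and A :: "'i \<Rightarrow> 'b set"
  assumes "left_module R M"
    and "direct_decomposition R M I A"
  shows "centrally_essential (End_ring R M) \<longleftrightarrow>
    (\<forall>i\<in>I. fully_invariant R M (A i)
       \<and> centrally_essential (End_ring R (M\<lparr>carrier := A i\<rparr>)))"
proof -
  interpret decomposed_module R M I A
    by (intro decomposed_module.intro decomposed_module_axioms.intro assms)
  show ?thesis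
    using fully_invariant_and_centrally_essential_summand centrally_essential_End_if_summands
    by blast
qed

end
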